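(* Let $G$ be a finite group and $H$ a normal subgroup of $G$ such that $G/H$ is cyclic. Suppose that the cosets $Hx$ and $Hy$ have equal order in the quotient group $G/H$. Then there exists a permutation $\sigma$ of the elements of $G$ such that (1) every subgroup of $G$ is $\sigma$-invariant; (2) for all $g_1,g_2\in G$, $(g_1\sigma)(g_2\sigma)=(g_2\sigma)(g_1\sigma)$ if and only if $g_1g_2=g_2g_1$; (3) $\sigma$ permutes the conjugacy classes of $G$; (4) $(Hx)\sigma = Hy$.
   Context: $g\sigma$ denotes the image of $g$ under $\sigma$. *)

theory Defs
  imports "HOL-Algebra.Algebra"
begin

definition conj_class :: "('a, 'b) monoid_scheme \<Rightarrow> 'a \<Rightarrow> 'a set" where
  "conj_class G a = {inv\<^bsub>G\<^esub> g \<otimes>\<^bsub>G\<^esub> a \<otimes>\<^bsub>G\<^esub> g | g. g \<in> carrier G}"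

definition conj_classes :: "('a, 'b) monoid_scheme \<Rightarrow> 'a set set" where
  "conj_classes G = {conj_class G a | a. a \<in> carrier G}"

end

theory Submission
  imports Defs "HOL-Number_Theory.Number_Theory"
begin

text \<open>
  The permutation is a power map \<open>g \<mapsto> g\<^sup>k\<close> with \<open>k\<close> coprime to \<open>|G|\<close>.
  Such a map is inverted by another power map, so it fixes every subgroup, preserves
  and reflects commutation, sends the class of \<open>u\<close> to the class of \<open>u\<^sup>k\<close>,
  and sends each coset \<open>Hw\<close> of a normal subgroup onto \<open>Hw\<^sup>k\<close>.  It remains to find
  \<open>k\<close> with \<open>(Hx)\<^sup>k = Hy\<close>: if \<open>c\<close> generates \<open>G/H\<close>, of order \<open>n\<close>, and
  \<open>Hx = c\<^sup>a\<close>, \<open>Hy = c\<^sup>b\<close>, then equal orders give \<open>gcd n a = gcd n b\<close>, so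
  \<open>a k \<equiv> b (mod n)\<close> has a solution \<open>k\<close> prime to \<open>n\<close>, which can be moved within
  its residue class mod \<open>n\<close> to be prime to \<open>|G|\<close> as well.
\<close>

lemma coprime_in_residue_class:
  fixes m d N :: nat
  assumes "coprime m d" "N > 0"
  shows "\<exists>k. [k = m] (mod d) \<and> coprime k N"
proof -
  define S where "S = {p. Factorial_Ring.prime p \<and> p dvd N \<and> \<not> p dvd m}"
  have finS: "finite S" unfolding S_def
    by (rule finite_subset[of _ "{..N}"]) (auto dest: dvd_imp_le simp: assms)
  define k where "k = m + d * \<Prod>S"
  \<comment> \<open>a prime dividing \<open>N\<close> divides exactly one of \<open>m\<close> and \<open>d * \<Prod>S\<close>\<close>
  have not_dvd: "\<not> p dvd k" if p: "Factorial_Ring.prime p" "p dvd N" for p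
  proof (cases "p dvd m")
    case True
    have "\<not> p dvd d" using True assms(1) p(1) coprime_common_divisor not_prime_unit by blast
    moreover have "\<not> p dvd \<Prod>S"
    proof
      assume "p dvd \<Prod>S"
      then obtain q where "q \<in> S" "p dvd q" using prime_dvd_prod_iff[OF finS p(1), of id] by auto
      with p(1) True show False unfolding S_def using primes_dvd_imp_eq by blast
    qed
    ultimately have "\<not> p dvd d * \<Prod>S" using p(1) prime_dvd_mult_iff by blast
    with True show ?thesis unfolding k_def by (simp add: dvd_add_right_iff)
  next
    case False
    then have "p dvd \<Prod>S" using p finS unfolding S_def by (auto intro: dvd_prodI)
    with False show ?thesis unfolding k_def by (simp add: dvd_add_left_iff)
  qed
  have "coprime k N"
  proof (rule ccontr)
    assume "\<not> coprime k N"
    moreover have "gcd k N \<noteq> 0" using assms(2) by simp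
    ultimately obtain p where "Factorial_Ring.prime p" "p dvd gcd k N"
      using prime_divisor_exists is_unit_gcd by blast
    with not_dvd show False by auto
  qed
  moreover have "[k = m] (mod d)" unfolding k_def cong_def by simp
  ultimately show ?thesis by blast
qed

lemma coprime_solution_of_cong_mult:
  fixes a b n N :: nat
  assumes "n > 0" "N > 0" "gcd n a = gcd n b"
  shows "\<exists>k. coprime k N \<and> [a * k = b] (mod n)"
proof -
  define e where "e = gcd n a"
  have "e \<noteq> 0" using assms(1) unfolding e_def by simp
  have e_b: "gcd n b = e" using assms(3) unfolding e_def by simp
  obtain n' a' where na: "n = n' * e" "a = a' * e" "coprime n' a'"
    using gcd_coprime_exists[of n a] \<open>e \<noteq> 0\<close> unfolding e_def by blast
  obtain n'' b' where nb: "n = n'' * e" "b = b' * e" "coprime n'' b'"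
    using gcd_coprime_exists[of n b] \<open>e \<noteq> 0\<close> unfolding e_b by blast
  have "n'' = n'" using na(1) nb(1) \<open>e \<noteq> 0\<close> by simp
  obtain u where u: "[a' * u = Suc 0] (mod n')"
    using cong_solve_coprime_nat[of a' n'] na(3) by (auto simp: coprime_commute)
  have "coprime u n'"
    using coprime_iff_invertible_nat[of u n'] u by (auto simp: mult.commute)
  then have "coprime (u * b') n'" using nb(3) \<open>n'' = n'\<close> by (simp add: coprime_commute)
  then obtain k where k: "[k = u * b'] (mod n')" "coprime k N"
    using coprime_in_residue_class[OF _ assms(2)] by blast
  have "[a' * k = a' * u * b'] (mod n')"
    using cong_scalar_left[OF k(1), of a'] by (simp add: mult.assoc)
  also have "[a' * u * b' = Suc 0 * b'] (mod n')" using u by (rule cong_scalar_right)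
  finally have "[a' * k = b'] (mod n')" by simp
  then have "[e * (a' * k) = e * b'] (mod e * n')" unfolding cong_def by (metis mult_mod_right)
  then have "[a * k = b] (mod n)" unfolding na(1,2) nb(2) by (simp add: ac_simps)
  with k(2) show ?thesis by blast
qed

context group
begin

lemma nat_pow_cong_ord:
  assumes "x \<in> carrier G" "[i = j] (mod ord x)"
  shows "x [^] (i::nat) = x [^] (j::nat)"
proof -
  have "int (ord x) dvd int j - int i"
    using assms(2) by (metis cong_iff_dvd_diff cong_int_iff cong_sym)
  then show ?thesis using int_pow_eq[OF assms(1), of "int i" "int j"] by (simp add: int_pow_int)
qed

lemma nat_pow_exponent_inverse_exists:
  assumes "finite (carrier G)" "coprime k (order G)"
  shows "\<exists>l. \<forall>g\<in>carrier G. g [^] (k * l) = g"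
proof -
  obtain l where l: "[k * l = 1] (mod order G)"
    using cong_solve_coprime_nat[OF assms(2)] by auto
  have "g [^] (k * l) = g" if "g \<in> carrier G" for g
    using nat_pow_cong_ord[OF that] l ord_dvd_group_order[OF that] cong_dvd_modulus_nat that
    by fastforce
  then show ?thesis by blast
qed

lemma nat_pow_commute_nat_pow:
  assumes "a \<otimes> b = b \<otimes> a" "a \<in> carrier G" "b \<in> carrier G"
  shows "a [^] (m::nat) \<otimes> b [^] (n::nat) = b [^] n \<otimes> a [^] m"
proof -
  have "b [^] n \<otimes> a = a \<otimes> b [^] n" using group_commutes_pow[of b a n] assms by simp
  then show ?thesis using group_commutes_pow[of a "b [^] n" m] assms by simp
qed

lemma conj_nat_pow:
  assumes "g \<in> carrier G" "a \<in> carrier G"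
  shows "(inv g \<otimes> a \<otimes> g) [^] (n::nat) = inv g \<otimes> a [^] n \<otimes> g"
proof (induction n)
  case (Suc n)
  have "g \<otimes> (inv g \<otimes> (a \<otimes> g)) = a \<otimes> g" using assms by (simp add: m_assoc[symmetric])
  then show ?case using Suc assms by (simp add: m_assoc)
qed (use assms in simp)

lemma subgroup_nat_pow_closed:
  assumes "subgroup K G" "g \<in> K"
  shows "g [^] (n::nat) \<in> K"
  using assms by (induction n) (auto intro: subgroup.one_closed subgroup.m_closed)

lemma nat_pow_exponent_inverse:
  fixes k l :: nat
  assumes "\<forall>g\<in>carrier G. g [^] (k * l) = g" "g \<in> carrier G"
  shows "(g [^] k) [^] l = g" "(g [^] l) [^] k = g"
  using assms by (metis nat_pow_pow mult.commute)+

lemma bij_betw_nat_pow: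
  fixes k l :: nat
  assumes "\<forall>g\<in>carrier G. g [^] (k * l) = g"
  shows "bij_betw (\<lambda>g. g [^] k) (carrier G) (carrier G)"
  by (rule bij_betw_byWitness[where f' = "\<lambda>g. g [^] l"])
    (use nat_pow_exponent_inverse[OF assms] in auto)

lemma nat_pow_image_subgroup:
  fixes k l :: nat
  assumes "\<forall>g\<in>carrier G. g [^] (k * l) = g" "subgroup K G"
  shows "(\<lambda>g. g [^] k) ` K = K"
proof
  show "(\<lambda>g. g [^] k) ` K \<subseteq> K" using assms(2) by (auto intro: subgroup_nat_pow_closed)
  show "K \<subseteq> (\<lambda>g. g [^] k) ` K"
  proof
    fix g assume "g \<in> K"
    then have "g = (g [^] l) [^] k" "g [^] l \<in> K"
      using assms subgroup.mem_carrier nat_pow_exponent_inverse subgroup_nat_pow_closed by metis+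
    then show "g \<in> (\<lambda>g. g [^] k) ` K" by blast
  qed
qed

lemma nat_pow_commute_iff:
  fixes k l :: nat
  assumes "\<forall>g\<in>carrier G. g [^] (k * l) = g" "a \<in> carrier G" "b \<in> carrier G"
  shows "a [^] k \<otimes> b [^] k = b [^] k \<otimes> a [^] k \<longleftrightarrow> a \<otimes> b = b \<otimes> a"
proof
  assume "a [^] k \<otimes> b [^] k = b [^] k \<otimes> a [^] k"
  then have "(a [^] k) [^] l \<otimes> (b [^] k) [^] l = (b [^] k) [^] l \<otimes> (a [^] k) [^] l"
    using nat_pow_commute_nat_pow assms(2,3) by blast
  then show "a \<otimes> b = b \<otimes> a" using assms by (simp add: nat_pow_exponent_inverse)
qed (use nat_pow_commute_nat_pow assms in blast)

lemma nat_pow_image_conj_class: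
  assumes "u \<in> carrier G"
  shows "(\<lambda>g. g [^] (k::nat)) ` conj_class G u = conj_class G (u [^] k)"
proof -
  have conj_class_image: "conj_class G v = (\<lambda>g. inv g \<otimes> v \<otimes> g) ` carrier G" for v
    unfolding conj_class_def by (rule Setcompr_eq_image)
  show ?thesis
    unfolding conj_class_image image_image using assms by (simp add: conj_nat_pow)
qed

lemma nat_pow_image_conj_classes:
  assumes "C \<in> conj_classes G"
  shows "(\<lambda>g. g [^] (k::nat)) ` C \<in> conj_classes G"
  using assms nat_pow_image_conj_class unfolding conj_classes_def by blast

lemma cyclic_group_nat_pow_generator:
  assumes "cyclic_group G" "finite (carrier G)"
  obtains c where "c \<in> carrier G" "\<And>z. z \<in> carrier G \<Longrightarrow> \<exists>a::nat. z = c [^] a"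
proof -
  obtain c where c: "c \<in> carrier G" "subgroup_generated G {c} = G"
    using assms(1) unfolding cyclic_group_def by blast
  then have "carrier G = generate G {c}"
    using carrier_subgroup_generated[of G "{c}"] by simp
  then have "carrier G = {c [^] k | k::nat. k \<in> UNIV}"
    using generate_pow_on_finite_carrier[OF assms(2) c(1)] by simp
  with c(1) that show ?thesis by blast
qed

lemma cyclic_group_pow_eq_if_ord_eq:
  fixes N :: nat
  assumes "cyclic_group G" "finite (carrier G)" "N > 0"
    and "u \<in> carrier G" "v \<in> carrier G" "ord u = ord v"
  shows "\<exists>k. coprime k N \<and> u [^] k = v"
proof -
  obtain c where c: "c \<in> carrier G" and pow: "\<And>z. z \<in> carrier G \<Longrightarrow> \<exists>a::nat. z = c [^] a"
    using cyclic_group_nat_pow_generator[OF assms(1,2)] by blast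
  obtain a b :: nat where ab: "u = c [^] a" "v = c [^] b" using pow assms(4,5) by blast
  define n where "n = ord c"
  have "n > 0" unfolding n_def using ord_ge_1[OF assms(2) c] by simp
  have ord_pow: "ord (c [^] m) = n div gcd n m" for m :: nat
    using ord_pow_gen[OF c, of m] \<open>n > 0\<close> unfolding n_def by simp
  have "n div gcd n a = n div gcd n b" using assms(6) ab ord_pow by simp
  then have "gcd n a = gcd n b"
    using \<open>n > 0\<close> by (metis dvd_div_eq_0_iff dvd_mult_div_cancel gcd_dvd1 gr_implies_not0
        mult_right_cancel)
  then obtain k where k: "coprime k N" "[a * k = b] (mod n)"
    using coprime_solution_of_cong_mult[OF \<open>n > 0\<close> assms(3)] by blast
  have "u [^] k = c [^] (a * k)" using ab(1) c by (simp add: nat_pow_pow)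
  also have "\<dots> = v" using nat_pow_cong_ord[OF c] k(2) ab(2) unfolding n_def by simp
  finally show ?thesis using k(1) by blast
qed

end

lemma (in normal) rcos_nat_pow:
  assumes "g \<in> carrier G"
  shows "(H #> g) [^]\<^bsub>G Mod H\<^esub> (n::nat) = H #> (g [^] n)"
  by (induction n) (use assms in \<open>simp_all add: coset_mult_one subset rcos_sum\<close>)

lemma (in normal) rcos_nat_pow_mem:
  assumes "x \<in> carrier G" "w \<in> H #> x"
  shows "w [^] (n::nat) \<in> H #> (x [^] n)"
proof -
  have w: "w \<in> carrier G" using assms r_coset_subset_G subset by blast
  have "H #> (w [^] n) = (H #> w) [^]\<^bsub>G Mod H\<^esub> n" using w by (simp add: rcos_nat_pow)
  also have "\<dots> = H #> (x [^] n)"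
    unfolding repr_independence[OF assms(2,1) subgroup_axioms, symmetric]
    by (rule rcos_nat_pow[OF assms(1)])
  finally have "H #> (w [^] n) = H #> (x [^] n)" .
  then show ?thesis using rcos_self[OF nat_pow_closed[OF w] subgroup_axioms] by metis
qed

lemma (in normal) nat_pow_image_rcos:
  fixes k l :: nat
  assumes "\<forall>g\<in>carrier G. g [^] (k * l) = g" "x \<in> carrier G"
  shows "(\<lambda>g. g [^] k) ` (H #> x) = H #> (x [^] k)"
proof
  show "(\<lambda>g. g [^] k) ` (H #> x) \<subseteq> H #> (x [^] k)"
    using rcos_nat_pow_mem[OF assms(2)] by blast
  show "H #> (x [^] k) \<subseteq> (\<lambda>g. g [^] k) ` (H #> x)"
  proof
    fix z assume z: "z \<in> H #> (x [^] k)"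
    have xk: "x [^] k \<in> carrier G" using assms(2) by (rule nat_pow_closed)
    have "z \<in> carrier G" using r_coset_subset_G[OF subset xk] z by blast
    then have "z = (z [^] l) [^] k" using nat_pow_exponent_inverse(2)[OF assms(1)] by simp
    moreover have "z [^] l \<in> H #> x"
      using rcos_nat_pow_mem[OF xk z, of l] nat_pow_exponent_inverse(1)[OF assms] by simp
    ultimately show "z \<in> (\<lambda>g. g [^] k) ` (H #> x)" by blast
  qed
qed

theorem lemma2p3:
  fixes G (structure) and H :: "'a set" and x y :: 'a
  assumes "group G"
    and "finite (carrier G)"
    and "H \<lhd> G"
    and "cyclic_group (G Mod H)"
    and "x \<in> carrier G" and "y \<in> carrier G"
    and "group.ord (G Mod H) (H #> x) = group.ord (G Mod H) (H #> y)"
  shows "\<exists>\<sigma>. bij_betw \<sigma> (carrier G) (carrier G)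
      \<and> (\<forall>K. subgroup K G \<longrightarrow> \<sigma> ` K = K)
      \<and> (\<forall>g1\<in>carrier G. \<forall>g2\<in>carrier G.
            (\<sigma> g1 \<otimes> \<sigma> g2 = \<sigma> g2 \<otimes> \<sigma> g1) \<longleftrightarrow> (g1 \<otimes> g2 = g2 \<otimes> g1))
      \<and> (\<forall>C\<in>conj_classes G. \<sigma> ` C \<in> conj_classes G)
      \<and> \<sigma> ` (H #> x) = H #> y"
proof -
  interpret group G by fact
  interpret normal H G by fact
  interpret quotient: group "G Mod H" by (rule factorgroup_is_group)
  have finite_quotient: "finite (carrier (G Mod H))"
    using assms(2) by (simp add: carrier_FactGroup)
  have cosets: "H #> x \<in> carrier (G Mod H)" "H #> y \<in> carrier (G Mod H)"
    using assms(5,6) by (auto simp: carrier_FactGroup)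
  have "order G > 0" using assms(2) order_gt_0_iff_finite by blast
  then obtain k where k: "coprime k (order G)" "(H #> x) [^]\<^bsub>G Mod H\<^esub> k = H #> y"
    using quotient.cyclic_group_pow_eq_if_ord_eq[OF assms(4) finite_quotient _ cosets assms(7)]
    by blast
  then have coset_pow: "H #> (x [^] k) = H #> y" using assms(5) by (simp add: rcos_nat_pow)
  obtain l where l: "\<forall>g\<in>carrier G. g [^] (k * l) = g"
    using nat_pow_exponent_inverse_exists[OF assms(2) k(1)] by blast
  show ?thesis
  proof (intro exI[of _ "\<lambda>g. g [^] k"] conjI allI impI ballI)
    show "bij_betw (\<lambda>g. g [^] k) (carrier G) (carrier G)" by (rule bij_betw_nat_pow[OF l])
    show "(\<lambda>g. g [^] k) ` K = K" if "subgroup K G" for K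
      by (rule nat_pow_image_subgroup[OF l that])
    show "g1 [^] k \<otimes> g2 [^] k = g2 [^] k \<otimes> g1 [^] k \<longleftrightarrow> g1 \<otimes> g2 = g2 \<otimes> g1"
      if "g1 \<in> carrier G" "g2 \<in> carrier G" for g1 g2
      by (rule nat_pow_commute_iff[OF l that])
    show "(\<lambda>g. g [^] k) ` C \<in> conj_classes G" if "C \<in> conj_classes G" for C
      by (rule nat_pow_image_conj_classes[OF that])
    show "(\<lambda>g. g [^] k) ` (H #> x) = H #> y"
      unfolding coset_pow[symmetric] by (rule nat_pow_image_rcos[OF l assms(5)])
  qed
qed

end
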